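(* Let $k$ be a commutative ring containing $1/2$ and let $A$ be a smooth commutative $k$-algebra such that the $A$-module $\mathrm{Der}_k(A)$ is free with a basis $\tau_1,\dots,\tau_n$ of pairwise commuting derivations; let $\omega_1,\dots,\omega_n$ be the dual basis of $\Omega^1_{A/k}$, so that $df=\sum_r\tau_r(f)\,\omega_r$ for $f\in A$. Let $g=(g^{ij})\in GL_n(A)$ be such that the derivations $\tau'_i=\sum_j g^{ij}\tau_j$ ($i=1,\dots,n$) pairwise commute, let $\omega'_1,\dots,\omega'_n$ be the basis of $\Omega^1_{A/k}$ dual to $(\tau'_i)$ (so $\omega'_i=\sum_p (g^{-1})^{pi}\omega_p$), and let $A=(A^{\alpha\beta})\in GL_m(A)$ be arbitrary. With summation over repeated indices, put $$g^{i\alpha\gamma}=g^{iq}\,\tau_q\big((A^{-1})^{\alpha\mu}\big)A^{\mu\gamma},\qquad h_E^{ij}=\tau_j\big(g^{i\nu\nu}\big)+\tfrac12\,g^{iq}\,\tau_j\big((A^{-1})^{\mu\beta}\big)A^{\beta\gamma}\,\tau_q\big((A^{-1})^{\gamma\nu}\big)A^{\nu\mu},$$ and for $1\le i,j\le n$ define the $1$-form $$B_{ij}=-\tfrac12\big\{g^{i\mu\nu}\,d g^{j\nu\mu}-g^{j\nu\mu}\,d g^{i\mu\nu}\big\}-g^{ip}\tau_p(h_E^{jq})\,\omega_q+g^{jp}\tau_p(h_E^{iq})\,\omega_q-h_E^{jp}\,dg^{ip}+h_E^{ip}\,dg^{jp}.$$ Then $$B_{ij}=-\tfrac12\,\mathrm{tr}\big\{A^{-1}\tau'_i(A)A^{-1}\tau'_j(A)A^{-1}\tau'_r(A)-A^{-1}\tau'_j(A)A^{-1}\tau'_i(A)A^{-1}\tau'_r(A)\big\}\,\omega'_r,$$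 where $\tau'_i(A)$ denotes the matrix obtained by applying $\tau'_i$ entrywise.
   Context: $(A^{-1})^{\alpha\beta}$ denotes the $(\alpha,\beta)$ entry of the inverse matrix, $(g^{-1})^{pi}$ the $(p,i)$ entry of $g^{-1}$; repeated indices are summed (e.g. $g^{i\nu\nu}=\sum_\nu g^{i\nu\nu}$). The algebra $A$ and the matrix $A$ are distinguished by context (the matrix always carries indices or appears inside traces/derivations as a matrix). *)

theory Defs
  imports Main
begin

definition kderiv :: "('k::comm_ring_1 \<Rightarrow> 'a::comm_ring_1) \<Rightarrow> ('a \<Rightarrow> 'a) \<Rightarrow> bool" where
  "kderiv phi D \<longleftrightarrow> (\<forall>x y. D (x + y) = D x + D y)
     \<and> (\<forall>x y. D (x * y) = x * D y + y * D x)
     \<and> (\<forall>c x. D (phi c * x) = phi c * D x)"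

definition is_ring_hom :: "('k::comm_ring_1 \<Rightarrow> 'a::comm_ring_1) \<Rightarrow> bool" where
  "is_ring_hom phi \<longleftrightarrow> phi 1 = 1 \<and> (\<forall>x y. phi (x + y) = phi x + phi y)
     \<and> (\<forall>x y. phi (x * y) = phi x * phi y)"

text \<open>Square matrices of size N as functions on indices below N.\<close>
definition mmul :: "nat \<Rightarrow> (nat \<Rightarrow> nat \<Rightarrow> 'a::comm_ring_1) \<Rightarrow> (nat \<Rightarrow> nat \<Rightarrow> 'a) \<Rightarrow> nat \<Rightarrow> nat \<Rightarrow> 'a" where
  "mmul N X Y = (\<lambda>a b. \<Sum>c<N. X a c * Y c b)"

definition mtr :: "nat \<Rightarrow> (nat \<Rightarrow> nat \<Rightarrow> 'a::comm_ring_1) \<Rightarrow> 'a" where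
  "mtr N X = (\<Sum>a<N. X a a)"

definition is_inverse :: "nat \<Rightarrow> (nat \<Rightarrow> nat \<Rightarrow> 'a::comm_ring_1) \<Rightarrow> (nat \<Rightarrow> nat \<Rightarrow> 'a) \<Rightarrow> bool" where
  "is_inverse N X Y \<longleftrightarrow> (\<forall>a<N. \<forall>b<N.
      mmul N X Y a b = (if a = b then 1 else 0) \<and> mmul N Y X a b = (if a = b then 1 else 0))"

definition tauP :: "nat \<Rightarrow> (nat \<Rightarrow> nat \<Rightarrow> 'a::comm_ring_1) \<Rightarrow> (nat \<Rightarrow> 'a \<Rightarrow> 'a) \<Rightarrow> nat \<Rightarrow> 'a \<Rightarrow> 'a" where
  "tauP n g tau i x = (\<Sum>j<n. g i j * tau j x)"

definition G3 :: "nat \<Rightarrow> nat \<Rightarrow> (nat \<Rightarrow> nat \<Rightarrow> 'a::comm_ring_1) \<Rightarrow> (nat \<Rightarrow> 'a \<Rightarrow> 'a)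
     \<Rightarrow> (nat \<Rightarrow> nat \<Rightarrow> 'a) \<Rightarrow> (nat \<Rightarrow> nat \<Rightarrow> 'a) \<Rightarrow> nat \<Rightarrow> nat \<Rightarrow> nat \<Rightarrow> 'a" where
  "G3 n m g tau Am Ai i \<alpha> \<gamma> = (\<Sum>q<n. \<Sum>\<mu><m. g i q * tau q (Ai \<alpha> \<mu>) * Am \<mu> \<gamma>)"

text \<open>h_E^{ij}; half is the element 1/2 of A\<close>
definition hE :: "'a::comm_ring_1 \<Rightarrow> nat \<Rightarrow> nat \<Rightarrow> (nat \<Rightarrow> nat \<Rightarrow> 'a) \<Rightarrow> (nat \<Rightarrow> 'a \<Rightarrow> 'a)
     \<Rightarrow> (nat \<Rightarrow> nat \<Rightarrow> 'a) \<Rightarrow> (nat \<Rightarrow> nat \<Rightarrow> 'a) \<Rightarrow> nat \<Rightarrow> nat \<Rightarrow> 'a" where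
  "hE half n m g tau Am Ai i j =
     tau j (\<Sum>\<nu><m. G3 n m g tau Am Ai i \<nu> \<nu>)
     + half * (\<Sum>q<n. \<Sum>\<mu><m. \<Sum>\<beta><m. \<Sum>\<gamma><m. \<Sum>\<nu><m.
          g i q * tau j (Ai \<mu> \<beta>) * Am \<beta> \<gamma> * tau q (Ai \<gamma> \<nu>) * Am \<nu> \<mu>)"

text \<open>1-forms are represented by their coordinate vectors w.r.t. the basis omega_1..omega_n
  of Omega^1_{A/k}: the form  sum_q c_q omega_q  is  c.  Thus  df = (\<lambda>q. tau q f)  and
  omega'_r = sum_p (g^{-1})^{pr} omega_p  = (\<lambda>p. gi p r).\<close>
definition dform :: "(nat \<Rightarrow> 'a \<Rightarrow> 'a) \<Rightarrow> 'a \<Rightarrow> nat \<Rightarrow> 'a" where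
  "dform tau f = (\<lambda>q. tau q f)"

definition Bform :: "'a::comm_ring_1 \<Rightarrow> nat \<Rightarrow> nat \<Rightarrow> (nat \<Rightarrow> nat \<Rightarrow> 'a) \<Rightarrow> (nat \<Rightarrow> 'a \<Rightarrow> 'a)
     \<Rightarrow> (nat \<Rightarrow> nat \<Rightarrow> 'a) \<Rightarrow> (nat \<Rightarrow> nat \<Rightarrow> 'a) \<Rightarrow> nat \<Rightarrow> nat \<Rightarrow> nat \<Rightarrow> 'a" where
  "Bform half n m g tau Am Ai i j = (\<lambda>q0.
     - half * (\<Sum>\<mu><m. \<Sum>\<nu><m.
          G3 n m g tau Am Ai i \<mu> \<nu> * dform tau (G3 n m g tau Am Ai j \<nu> \<mu>) q0
        - G3 n m g tau Am Ai j \<nu> \<mu> * dform tau (G3 n m g tau Am Ai i \<mu> \<nu>) q0)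
     - (\<Sum>p<n. g i p * tau p (hE half n m g tau Am Ai j q0))
     + (\<Sum>p<n. g j p * tau p (hE half n m g tau Am Ai i q0))
     - (\<Sum>p<n. hE half n m g tau Am Ai j p * dform tau (g i p) q0)
     + (\<Sum>p<n. hE half n m g tau Am Ai i p * dform tau (g j p) q0))"

definition mapm :: "('a \<Rightarrow> 'a) \<Rightarrow> (nat \<Rightarrow> nat \<Rightarrow> 'a) \<Rightarrow> nat \<Rightarrow> nat \<Rightarrow> 'a" where
  "mapm D X = (\<lambda>a b. D (X a b))"

definition RHSform :: "'a::comm_ring_1 \<Rightarrow> nat \<Rightarrow> nat \<Rightarrow> (nat \<Rightarrow> nat \<Rightarrow> 'a) \<Rightarrow> (nat \<Rightarrow> nat \<Rightarrow> 'a)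
     \<Rightarrow> (nat \<Rightarrow> 'a \<Rightarrow> 'a) \<Rightarrow> (nat \<Rightarrow> nat \<Rightarrow> 'a) \<Rightarrow> (nat \<Rightarrow> nat \<Rightarrow> 'a) \<Rightarrow> nat \<Rightarrow> nat \<Rightarrow> nat \<Rightarrow> 'a" where
  "RHSform half n m g gi tau Am Ai i j = (\<lambda>q0.
     - half * (\<Sum>r<n.
        mtr m (\<lambda>a b.
           mmul m (mmul m (mmul m Ai (mapm (tauP n g tau i) Am))
                           (mmul m Ai (mapm (tauP n g tau j) Am)))
                  (mmul m Ai (mapm (tauP n g tau r) Am)) a b
         - mmul m (mmul m (mmul m Ai (mapm (tauP n g tau j) Am))
                           (mmul m Ai (mapm (tauP n g tau i) Am)))
                  (mmul m Ai (mapm (tauP n g tau r) Am)) a b)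
        * gi q0 r))"

end

theory Submission
  imports Defs
begin

text \<open>Write X_i = A^{-1} tau'_i(A), so that g^{i alpha gamma} = -X_i^{alpha gamma}. As g is invertible,
  it suffices to compare both 1-forms on every tau'_s. Since the tau'_i commute and the tau_r form a
  basis, tau'_i(g^{sp}) = tau'_s(g^{ip}); this turns the dg-terms of B_ij into derivatives of
  h_E(tau'_s) = -tau'_s(tr X_j) + 1/2 tr(X_s X_j). The second derivatives tau'_i tau'_s (tr X_j) then
  cancel, and the zero-curvature equation tau'_a X_b - tau'_b X_a = [X_b, X_a] together with cyclicity
  of the trace leaves -1/2 tr([X_i, X_j] X_s).\<close>

definition derivation :: "('a::comm_ring_1 \<Rightarrow> 'a) \<Rightarrow> bool" where
  "derivation D \<longleftrightarrow> (\<forall>x y. D (x + y) = D x + D y) \<and> (\<forall>x y. D (x * y) = x * D y + y * D x)"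

lemma derivation_add: "derivation D \<Longrightarrow> D (x + y) = D x + D y"
  unfolding derivation_def by blast

lemma derivation_mult: "derivation D \<Longrightarrow> D (x * y) = x * D y + y * D x"
  unfolding derivation_def by blast

lemma derivation_zero: "derivation D \<Longrightarrow> D 0 = 0"
  using derivation_add[of D 0 0] by simp

lemma derivation_one: "derivation D \<Longrightarrow> D 1 = 0"
  using derivation_mult[of D 1 1] by simp

lemma derivation_minus: "derivation D \<Longrightarrow> D (- x) = - D x"
  using derivation_add[of D x "- x"] derivation_zero[of D]
  by (simp add: eq_neg_iff_add_eq_0 add.commute)

lemma derivation_sum: "derivation D \<Longrightarrow> D (sum f A) = (\<Sum>a\<in>A. D (f a))"
  by (induct A rule: infinite_finite_induct) (auto simp: derivation_zero derivation_add)

lemma kderiv_imp_derivation: "kderiv phi D \<Longrightarrow> derivation D"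
  unfolding kderiv_def derivation_def by blast

lemma kderiv_scalar: "kderiv phi D \<Longrightarrow> D (phi c * x) = phi c * D x"
  unfolding kderiv_def by blast

lemma kderiv_tauP:
  assumes "\<forall>r<n. kderiv phi (tau r)"
  shows "kderiv phi (tauP n g tau i)"
proof -
  have tau: "tau r (x + y) = tau r x + tau r y" "tau r (x * y) = x * tau r y + y * tau r x"
    "tau r (phi c * x) = phi c * tau r x" if "r < n" for r x y c
    using assms that unfolding kderiv_def by blast+
  have "tauP n g tau i (x + y) = tauP n g tau i x + tauP n g tau i y" for x y
    unfolding tauP_def by (simp add: tau distrib_left sum.distrib)
  moreover have "tauP n g tau i (x * y) = x * tauP n g tau i y + y * tauP n g tau i x" for x y
    unfolding tauP_def by (simp add: tau distrib_left sum.distrib sum_distrib_left algebra_simps)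
  moreover have "tauP n g tau i (phi c * x) = phi c * tauP n g tau i x" for c x
    unfolding tauP_def sum_distrib_left by (rule sum.cong) (simp_all add: tau(3) mult.left_commute)
  ultimately show ?thesis
    unfolding kderiv_def by blast
qed

lemma kderiv_basis_independent:
  fixes phi :: "'k::comm_ring_1 \<Rightarrow> 'a::comm_ring_1" and n :: nat
  assumes basis: "\<forall>D. kderiv phi D \<longrightarrow>
        (\<exists>!a. (\<forall>r\<ge>n. a r = 0) \<and> D = (\<lambda>x. \<Sum>r<n. a r * tau r x))"
    and zero: "\<And>x. (\<Sum>r<n. c r * tau r x) = 0" and "r < n"
  shows "c r = 0"
proof -
  define c' where "c' r = (if r < n then c r else 0)" for r
  have "kderiv phi (\<lambda>x. 0::'a)"
    by (simp add: kderiv_def)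
  then have "\<exists>!a. (\<forall>r\<ge>n. a r = 0) \<and> (\<lambda>x. 0::'a) = (\<lambda>x. \<Sum>r<n. a r * tau r x)"
    using basis by simp
  then obtain a where unique:
    "\<And>b. (\<forall>r\<ge>n. b r = 0) \<and> (\<lambda>x. 0::'a) = (\<lambda>x. \<Sum>r<n. b r * tau r x) \<Longrightarrow> b = a"
    by (elim ex1E) blast
  have "\<forall>r\<ge>n. c' r = 0"
    by (simp add: c'_def)
  moreover have "(\<lambda>x. 0::'a) = (\<lambda>x. \<Sum>r<n. c' r * tau r x)"
    using zero by (simp add: c'_def)
  ultimately have "c' = a"
    using unique by blast
  moreover have "(\<lambda>_. 0) = a"
    by (rule unique) simp
  ultimately have "c' = (\<lambda>_. 0)"
    by simp
  then show ?thesis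
    using \<open>r < n\<close> by (metis c'_def)
qed

lemma mmul_assoc: "mmul m (mmul m P Q) R = mmul m P (mmul m Q R)"
proof (intro ext)
  fix a b
  have "mmul m (mmul m P Q) R a b = (\<Sum>c<m. \<Sum>d<m. P a d * (Q d c * R c b))"
    unfolding mmul_def by (simp add: sum_distrib_right mult.assoc)
  also have "\<dots> = (\<Sum>d<m. \<Sum>c<m. P a d * (Q d c * R c b))"
    by (rule sum.swap)
  also have "\<dots> = mmul m P (mmul m Q R) a b"
    unfolding mmul_def by (simp add: sum_distrib_left)
  finally show "mmul m (mmul m P Q) R a b = mmul m P (mmul m Q R) a b" .
qed

lemma mmul_cong_left:
  "(\<And>c. c < m \<Longrightarrow> P a c = P' a c) \<Longrightarrow> mmul m P Q a b = mmul m P' Q a b"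
  unfolding mmul_def by simp

lemma mmul_uminus_left: "mmul m (\<lambda>a c. - P a c) Q a b = - mmul m P Q a b"
  unfolding mmul_def by (simp add: sum_negf)

lemma mmul_right_identity:
  assumes "\<And>c. c < m \<Longrightarrow> Q c b = (if c = b then 1 else 0)" and "b < m"
  shows "mmul m P Q a b = P a b"
proof -
  have "mmul m P Q a b = (\<Sum>c<m. if c = b then P a c else 0)"
    unfolding mmul_def using assms(1) by (intro sum.cong) auto
  then show ?thesis
    using assms(2) by simp
qed

lemma mtr_add: "mtr m (\<lambda>a b. P a b + Q a b) = mtr m P + mtr m Q"
  unfolding mtr_def by (rule sum.distrib)

lemma mtr_diff: "mtr m (\<lambda>a b. P a b - Q a b) = mtr m P - mtr m Q"
  unfolding mtr_def by (rule sum_subtractf)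

lemma mtr_mmul_commute: "mtr m (mmul m P Q) = mtr m (mmul m Q P)"
  unfolding mtr_def mmul_def by (subst sum.swap) (simp add: mult.commute)

lemma mtr_mmul_rotate: "mtr m (mmul m (mmul m P Q) R) = mtr m (mmul m (mmul m R P) Q)"
  using mtr_mmul_commute[of m "mmul m P Q" R] by (simp only: mmul_assoc)

lemma mtr_mmul_cong_left:
  "(\<And>a c. a < m \<Longrightarrow> c < m \<Longrightarrow> P a c = P' a c) \<Longrightarrow> mtr m (mmul m P Q) = mtr m (mmul m P' Q)"
  unfolding mtr_def mmul_def by simp

lemma derivation_mmul:
  "derivation D \<Longrightarrow> D (mmul m P Q a b) = mmul m (mapm D P) Q a b + mmul m P (mapm D Q) a b"
  unfolding mmul_def mapm_def by (simp add: derivation_sum derivation_mult sum.distrib algebra_simps)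

lemma derivation_mtr: "derivation D \<Longrightarrow> D (mtr m P) = mtr m (mapm D P)"
  unfolding mtr_def mapm_def by (simp add: derivation_sum)

lemma derivation_mtr_mmul:
  assumes "derivation D"
  shows "D (mtr m (mmul m P Q)) = mtr m (mmul m (mapm D P) Q) + mtr m (mmul m P (mapm D Q))"
  unfolding derivation_mtr[OF assms]
  by (simp add: mapm_def[of D "mmul m P Q"] derivation_mmul[OF assms] mtr_add)

definition log_deriv :: "nat \<Rightarrow> (nat \<Rightarrow> nat \<Rightarrow> 'a::comm_ring_1) \<Rightarrow> (nat \<Rightarrow> nat \<Rightarrow> 'a) \<Rightarrow> ('a \<Rightarrow> 'a)
    \<Rightarrow> nat \<Rightarrow> nat \<Rightarrow> 'a" where
  "log_deriv m Ai Am D = mmul m Ai (mapm D Am)"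

lemma log_deriv_tauP:
  "log_deriv m Ai Am (tauP n g tau i) a b = (\<Sum>q<n. g i q * log_deriv m Ai Am (tau q) a b)"
proof -
  have "log_deriv m Ai Am (tauP n g tau i) a b = (\<Sum>c<m. \<Sum>q<n. g i q * (Ai a c * tau q (Am c b)))"
    unfolding log_deriv_def mmul_def mapm_def tauP_def
    by (simp add: sum_distrib_left mult_ac)
  also have "\<dots> = (\<Sum>q<n. \<Sum>c<m. g i q * (Ai a c * tau q (Am c b)))"
    by (rule sum.swap)
  finally show ?thesis
    unfolding log_deriv_def mmul_def mapm_def by (simp add: sum_distrib_left)
qed

lemma mtr_mmul_log_deriv_tauP:
  "(\<Sum>c<n. g s c * mtr m (mmul m (log_deriv m Ai Am (tau c)) Q))
     = mtr m (mmul m (log_deriv m Ai Am (tauP n g tau s)) Q)"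
proof -
  have "(\<Sum>c<n. g s c * mtr m (mmul m (log_deriv m Ai Am (tau c)) Q))
      = (\<Sum>a<m. \<Sum>c<n. \<Sum>b<m. g s c * (log_deriv m Ai Am (tau c) a b * Q b a))"
    unfolding mtr_def mmul_def sum_distrib_left by (rule sum.swap)
  also have "\<dots> = (\<Sum>a<m. \<Sum>b<m. \<Sum>c<n. g s c * (log_deriv m Ai Am (tau c) a b * Q b a))"
    by (intro sum.cong refl sum.swap)
  also have "\<dots> = mtr m (mmul m (log_deriv m Ai Am (tauP n g tau s)) Q)"
    unfolding mtr_def mmul_def log_deriv_tauP by (simp add: sum_distrib_right mult.assoc)
  finally show ?thesis .
qed

text \<open>The value of the 1-form sum_q w_q omega_q on the derivation tau'_s = sum_c g^{sc} tau_c.\<close>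
definition eval_form :: "nat \<Rightarrow> (nat \<Rightarrow> nat \<Rightarrow> 'a::comm_ring_1) \<Rightarrow> (nat \<Rightarrow> 'a) \<Rightarrow> nat \<Rightarrow> 'a" where
  "eval_form n g w s = (\<Sum>c<n. g s c * w c)"

lemma eval_form_add: "eval_form n g (\<lambda>c. v c + w c) s = eval_form n g v s + eval_form n g w s"
  unfolding eval_form_def by (simp add: distrib_left sum.distrib)

lemma eval_form_diff: "eval_form n g (\<lambda>c. v c - w c) s = eval_form n g v s - eval_form n g w s"
  unfolding eval_form_def by (simp add: right_diff_distrib sum_subtractf)

lemma eval_form_cmult: "eval_form n g (\<lambda>c. h * w c) s = h * eval_form n g w s"
  unfolding eval_form_def by (simp add: sum_distrib_left mult.left_commute)

lemma eval_form_inject: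
  assumes "is_inverse n g gi" and "\<And>s. s < n \<Longrightarrow> eval_form n g v s = eval_form n g w s" and "q < n"
  shows "v q = w q"
proof -
  have recover: "(\<Sum>s<n. gi q s * eval_form n g u s) = u q" for u
  proof -
    have "(\<Sum>s<n. gi q s * eval_form n g u s) = (\<Sum>c<n. \<Sum>s<n. gi q s * (g s c * u c))"
      unfolding eval_form_def sum_distrib_left by (rule sum.swap)
    also have "\<dots> = (\<Sum>c<n. mmul n gi g q c * u c)"
      by (simp add: mmul_def sum_distrib_right mult.assoc)
    also have "\<dots> = (\<Sum>c<n. if c = q then u c else 0)"
      using assms(1,3) unfolding is_inverse_def by (intro sum.cong refl) auto
    finally show ?thesis
      using assms(3) by simp
  qed
  show ?thesis
    using recover[of v] recover[of w] assms(2) by simp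
qed

locale matrix_inverse =
  fixes m :: nat and Am Ai :: "nat \<Rightarrow> nat \<Rightarrow> 'a::comm_ring_1"
  assumes inverse: "is_inverse m Am Ai"
begin

abbreviation L :: "('a \<Rightarrow> 'a) \<Rightarrow> nat \<Rightarrow> nat \<Rightarrow> 'a" where
  "L \<equiv> log_deriv m Ai Am"

lemma inverse_left: "a < m \<Longrightarrow> b < m \<Longrightarrow> mmul m Ai Am a b = (if a = b then 1 else 0)"
  using inverse unfolding is_inverse_def by blast

lemma inverse_right: "a < m \<Longrightarrow> b < m \<Longrightarrow> mmul m Am Ai a b = (if a = b then 1 else 0)"
  using inverse unfolding is_inverse_def by blast

lemma derivation_inverse_mmul:
  assumes D: "derivation D" and "a < m" "b < m"
  shows "mmul m (mapm D Ai) Am a b = - L D a b"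
proof -
  have "mmul m (mapm D Ai) Am a b + L D a b = D (mmul m Ai Am a b)"
    unfolding log_deriv_def derivation_mmul[OF D] ..
  also have "\<dots> = 0"
    using assms by (simp add: inverse_left derivation_zero derivation_one)
  finally show ?thesis
    by (simp add: eq_neg_iff_add_eq_0)
qed

lemma derivation_inverse:
  assumes D: "derivation D" and "a < m" "c < m"
  shows "D (Ai a c) = - mmul m (L D) Ai a c"
proof -
  have "D (Ai a c) = mmul m (mapm D Ai) (mmul m Am Ai) a c"
    using assms by (simp add: mmul_right_identity inverse_right mapm_def)
  also have "\<dots> = mmul m (\<lambda>x y. - L D x y) Ai a c"
    unfolding mmul_assoc[symmetric] using assms
    by (intro mmul_cong_left) (simp add: derivation_inverse_mmul)
  finally show ?thesis
    by (simp add: mmul_uminus_left)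
qed

lemma derivation_log_deriv:
  assumes D1: "derivation D1" and "a < m"
  shows "D1 (L D2 a b) = L (D1 \<circ> D2) a b - mmul m (L D1) (L D2) a b"
proof -
  have "mmul m (mapm D1 Ai) (mapm D2 Am) a b = mmul m (\<lambda>x y. - mmul m (L D1) Ai x y) (mapm D2 Am) a b"
    using assms by (intro mmul_cong_left) (simp add: mapm_def derivation_inverse)
  also have "\<dots> = - mmul m (L D1) (L D2) a b"
    unfolding mmul_uminus_left mmul_assoc log_deriv_def ..
  finally have "mmul m (mapm D1 Ai) (mapm D2 Am) a b = - mmul m (L D1) (L D2) a b" .
  moreover have "mapm D1 (mapm D2 Am) = mapm (D1 \<circ> D2) Am"
    by (simp add: mapm_def)
  ultimately show ?thesis
    unfolding log_deriv_def derivation_mmul[OF D1] by simp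
qed

text \<open>The zero-curvature (Maurer-Cartan) equation of the flat connection A^{-1} dA.\<close>
lemma log_deriv_flat:
  assumes "derivation D1" "derivation D2" and commute: "\<And>x. D1 (D2 x) = D2 (D1 x)" and "a < m"
  shows "D1 (L D2 a b) = D2 (L D1 a b) - mmul m (L D1) (L D2) a b + mmul m (L D2) (L D1) a b"
proof -
  have "D1 \<circ> D2 = D2 \<circ> D1"
    using commute by auto
  then show ?thesis
    using assms by (simp add: derivation_log_deriv)
qed

lemma mtr_log_deriv_symmetric:
  assumes "derivation D1" "derivation D2" and "\<And>x. D1 (D2 x) = D2 (D1 x)"
  shows "D1 (mtr m (L D2)) = D2 (mtr m (L D1))"
proof -
  have "D1 (mtr m (L D2)) = mtr m (mapm D1 (L D2))"
    by (rule derivation_mtr[OF assms(1)])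
  also have "\<dots> = mtr m (\<lambda>a b. D2 (L D1 a b) - mmul m (L D1) (L D2) a b + mmul m (L D2) (L D1) a b)"
    unfolding mtr_def mapm_def by (simp add: log_deriv_flat[OF assms])
  also have "\<dots> = D2 (mtr m (L D1))"
    by (simp add: mtr_add mtr_diff derivation_mtr[OF assms(2)] mapm_def mtr_mmul_commute[of m "L D1"])
  finally show ?thesis .
qed

lemma mtr_mmul_log_deriv_flat:
  assumes "derivation D1" "derivation D2" and "\<And>x. D1 (D2 x) = D2 (D1 x)"
  shows "mtr m (mmul m (mapm D1 (L D2)) Q) = mtr m (mmul m (mapm D2 (L D1)) Q)
    - mtr m (mmul m (mmul m (L D1) (L D2)) Q) + mtr m (mmul m (mmul m (L D2) (L D1)) Q)"
proof -
  have "mtr m (mmul m (mapm D1 (L D2)) Q) = mtr m (mmul m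
      (\<lambda>a c. mapm D2 (L D1) a c - mmul m (L D1) (L D2) a c + mmul m (L D2) (L D1) a c) Q)"
    by (intro mtr_mmul_cong_left) (simp add: mapm_def log_deriv_flat[OF assms])
  then show ?thesis
    by (simp add: mtr_def mmul_def distrib_right left_diff_distrib sum.distrib sum_subtractf)
qed

end

locale commuting_frames =
  fixes phi :: "'k::comm_ring_1 \<Rightarrow> 'a::comm_ring_1" and n :: nat
    and tau :: "nat \<Rightarrow> 'a \<Rightarrow> 'a" and g :: "nat \<Rightarrow> nat \<Rightarrow> 'a"
  assumes tau_kderiv: "\<forall>r<n. kderiv phi (tau r)"
    and tau_basis: "\<forall>D. kderiv phi D \<longrightarrow>
        (\<exists>!a. (\<forall>r\<ge>n. a r = 0) \<and> D = (\<lambda>x. \<Sum>r<n. a r * tau r x))"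
    and tau_commute: "\<forall>r<n. \<forall>s<n. \<forall>x. tau r (tau s x) = tau s (tau r x)"
    and tauP_commute:
      "\<forall>r<n. \<forall>s<n. \<forall>x. tauP n g tau r (tauP n g tau s x) = tauP n g tau s (tauP n g tau r x)"
begin

abbreviation tau' :: "nat \<Rightarrow> 'a \<Rightarrow> 'a" where
  "tau' \<equiv> tauP n g tau"

lemma tau_derivation: "r < n \<Longrightarrow> derivation (tau r)"
  using tau_kderiv kderiv_imp_derivation by blast

lemma tau'_derivation: "derivation (tau' i)"
  using kderiv_tauP[OF tau_kderiv] kderiv_imp_derivation by blast

lemma tau'_scalar: "tau' i (phi c * x) = phi c * tau' i x"
  using kderiv_tauP[OF tau_kderiv] kderiv_scalar by blast

lemma tau'_commutator:
  "tau' i (tau' s x) - tau' s (tau' i x) = (\<Sum>l<n. (tau' i (g s l) - tau' s (g i l)) * tau l x)"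
proof -
  have leibniz: "tau' a (tau' b x) = (\<Sum>l<n. g b l * tau' a (tau l x)) + (\<Sum>l<n. tau l x * tau' a (g b l))"
    for a b
    unfolding tauP_def[of n g tau b x]
    by (simp add: derivation_sum[OF tau'_derivation] derivation_mult[OF tau'_derivation] sum.distrib)
  have "(\<Sum>l<n. g s l * tau' i (tau l x)) = (\<Sum>l<n. \<Sum>j<n. g s l * g i j * tau j (tau l x))"
    by (simp add: tauP_def sum_distrib_left mult.assoc)
  also have "\<dots> = (\<Sum>j<n. \<Sum>l<n. g s l * g i j * tau j (tau l x))"
    by (rule sum.swap)
  also have "\<dots> = (\<Sum>j<n. \<Sum>l<n. g i j * g s l * tau l (tau j x))"
    using tau_commute by (intro sum.cong refl) (simp add: mult.commute)
  also have "\<dots> = (\<Sum>l<n. g i l * tau' s (tau l x))"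
    by (simp add: tauP_def sum_distrib_left mult.assoc)
  finally have "(\<Sum>l<n. g s l * tau' i (tau l x)) = (\<Sum>l<n. g i l * tau' s (tau l x))" .
  then show ?thesis
    unfolding leibniz by (simp add: algebra_simps sum_subtractf[symmetric])
qed

lemma tau'_coefficients_symmetric:
  assumes "i < n" "s < n" "p < n"
  shows "tau' i (g s p) = tau' s (g i p)"
proof -
  have "(\<Sum>l<n. (tau' i (g s l) - tau' s (g i l)) * tau l x) = 0" for x
    using tau'_commutator[of i s x, symmetric] tauP_commute assms(1,2) by simp
  then have "tau' i (g s p) - tau' s (g i p) = 0"
    by (rule kderiv_basis_independent[OF tau_basis _ assms(3)])
  then show ?thesis
    by simp
qed

lemma tau'_eval_form:
  assumes "i < n" "s < n"
  shows "tau' i (eval_form n g w s)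
    = eval_form n g (\<lambda>c. tau' i (w c)) s + eval_form n g (\<lambda>c. \<Sum>p<n. w p * tau c (g i p)) s"
proof -
  have "(\<Sum>c<n. w c * tau' i (g s c)) = (\<Sum>c<n. w c * tau' s (g i c))"
    using assms by (intro sum.cong refl) (simp add: tau'_coefficients_symmetric)
  also have "\<dots> = (\<Sum>c<n. \<Sum>p<n. g s p * (w c * tau p (g i c)))"
    by (simp add: tauP_def sum_distrib_left mult_ac)
  also have "\<dots> = eval_form n g (\<lambda>p. \<Sum>c<n. w c * tau p (g i c)) s"
    unfolding eval_form_def sum_distrib_left by (rule sum.swap)
  finally show ?thesis
    unfolding eval_form_def[of n g w]
    by (simp add: derivation_sum[OF tau'_derivation] derivation_mult[OF tau'_derivation]
        sum.distrib eval_form_def[of n g "\<lambda>c. tau' i (w c)"])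
qed

end

locale frame_gauge = commuting_frames phi n tau g + matrix_inverse m Am Ai
  for phi :: "'k::comm_ring_1 \<Rightarrow> 'a::comm_ring_1" and n tau g m and Am Ai :: "nat \<Rightarrow> nat \<Rightarrow> 'a" +
  fixes gi :: "nat \<Rightarrow> nat \<Rightarrow> 'a"
  assumes g_inverse: "is_inverse n g gi"
begin

abbreviation X :: "nat \<Rightarrow> nat \<Rightarrow> nat \<Rightarrow> 'a" where
  "X i \<equiv> L (tau' i)"

lemma G3_eq: "a < m \<Longrightarrow> b < m \<Longrightarrow> G3 n m g tau Am Ai i a b = - X i a b"
proof -
  assume ab: "a < m" "b < m"
  have "G3 n m g tau Am Ai i a b = (\<Sum>\<mu><m. \<Sum>q<n. g i q * tau q (Ai a \<mu>) * Am \<mu> b)"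
    unfolding G3_def by (rule sum.swap)
  also have "\<dots> = mmul m (mapm (tau' i) Ai) Am a b"
    by (simp add: mmul_def mapm_def tauP_def sum_distrib_right)
  also have "\<dots> = - X i a b"
    by (rule derivation_inverse_mmul[OF tau'_derivation ab])
  finally show ?thesis .
qed

lemma hE_eq:
  assumes c: "c < n"
  shows "hE h n m g tau Am Ai j c = - tau c (mtr m (X j)) + h * mtr m (mmul m (L (tau c)) (X j))"
proof -
  let ?F = "\<lambda>\<mu> \<beta> \<gamma> q \<nu>. tau c (Ai \<mu> \<beta>) * Am \<beta> \<gamma> * (g j q * tau q (Ai \<gamma> \<nu>) * Am \<nu> \<mu>)"
  have "(\<Sum>\<nu><m. G3 n m g tau Am Ai j \<nu> \<nu>) = - mtr m (X j)"
    unfolding mtr_def by (simp add: G3_eq sum_negf)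
  moreover have "(\<Sum>q<n. \<Sum>\<mu><m. \<Sum>\<beta><m. \<Sum>\<gamma><m. \<Sum>\<nu><m.
      g j q * tau c (Ai \<mu> \<beta>) * Am \<beta> \<gamma> * tau q (Ai \<gamma> \<nu>) * Am \<nu> \<mu>)
    = (\<Sum>q<n. \<Sum>\<mu><m. \<Sum>\<beta><m. \<Sum>\<gamma><m. \<Sum>\<nu><m. ?F \<mu> \<beta> \<gamma> q \<nu>)"
    by (intro sum.cong refl) (simp only: mult_ac)
  moreover have "\<dots> = (\<Sum>\<mu><m. \<Sum>q<n. \<Sum>\<beta><m. \<Sum>\<gamma><m. \<Sum>\<nu><m. ?F \<mu> \<beta> \<gamma> q \<nu>)"
    by (rule sum.swap)
  moreover have "\<dots> = (\<Sum>\<mu><m. \<Sum>\<beta><m. \<Sum>q<n. \<Sum>\<gamma><m. \<Sum>\<nu><m. ?F \<mu> \<beta> \<gamma> q \<nu>)"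
    by (intro sum.cong refl sum.swap)
  moreover have "\<dots> = (\<Sum>\<mu><m. \<Sum>\<beta><m. \<Sum>\<gamma><m. \<Sum>q<n. \<Sum>\<nu><m. ?F \<mu> \<beta> \<gamma> q \<nu>)"
    by (intro sum.cong refl sum.swap)
  moreover have "\<dots> = (\<Sum>\<mu><m. \<Sum>\<gamma><m. \<Sum>\<beta><m. \<Sum>q<n. \<Sum>\<nu><m. ?F \<mu> \<beta> \<gamma> q \<nu>)"
    by (intro sum.cong refl sum.swap)
  moreover have "\<dots> = (\<Sum>\<mu><m. \<Sum>\<gamma><m. mmul m (mapm (tau c) Ai) Am \<mu> \<gamma> * G3 n m g tau Am Ai j \<gamma> \<mu>)"
    unfolding mmul_def mapm_def G3_def by (simp only: sum_distrib_right) (simp only: sum_distrib_left)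
  moreover have "\<dots> = mtr m (mmul m (L (tau c)) (X j))"
    unfolding mtr_def mmul_def[of m "L (tau c)"]
    by (simp add: G3_eq derivation_inverse_mmul[OF tau_derivation[OF c]])
  ultimately show ?thesis
    unfolding hE_def by (simp add: derivation_minus[OF tau_derivation[OF c]])
qed

lemma eval_form_hE:
  "eval_form n g (hE h n m g tau Am Ai j) s = - tau' s (mtr m (X j)) + h * mtr m (mmul m (X s) (X j))"
proof -
  have "eval_form n g (hE h n m g tau Am Ai j) s
      = eval_form n g (\<lambda>c. - tau c (mtr m (X j)) + h * mtr m (mmul m (L (tau c)) (X j))) s"
    unfolding eval_form_def by (intro sum.cong refl) (simp add: hE_eq)
  also have "\<dots> = - tau' s (mtr m (X j)) + h * mtr m (mmul m (X s) (X j))"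
    unfolding eval_form_add eval_form_cmult
    by (simp add: eval_form_def tauP_def sum_negf mtr_mmul_log_deriv_tauP)
  finally show ?thesis .
qed

lemma eval_form_G3:
  "eval_form n g (\<lambda>c. \<Sum>\<mu><m. \<Sum>\<nu><m.
       G3 n m g tau Am Ai i \<mu> \<nu> * tau c (G3 n m g tau Am Ai j \<nu> \<mu>)
     - G3 n m g tau Am Ai j \<nu> \<mu> * tau c (G3 n m g tau Am Ai i \<mu> \<nu>)) s
   = mtr m (mmul m (X i) (mapm (tau' s) (X j))) - mtr m (mmul m (mapm (tau' s) (X i)) (X j))"
proof -
  have "eval_form n g (\<lambda>c. \<Sum>\<mu><m. \<Sum>\<nu><m.
       G3 n m g tau Am Ai i \<mu> \<nu> * tau c (G3 n m g tau Am Ai j \<nu> \<mu>)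
     - G3 n m g tau Am Ai j \<nu> \<mu> * tau c (G3 n m g tau Am Ai i \<mu> \<nu>)) s
    = (\<Sum>c<n. g s c * (\<Sum>\<mu><m. \<Sum>\<nu><m. X i \<mu> \<nu> * tau c (X j \<nu> \<mu>) - X j \<nu> \<mu> * tau c (X i \<mu> \<nu>)))"
    unfolding eval_form_def
    by (intro sum.cong refl) (simp add: G3_eq derivation_minus[OF tau_derivation])
  also have "\<dots> = (\<Sum>\<mu><m. \<Sum>c<n. \<Sum>\<nu><m. g s c * (X i \<mu> \<nu> * tau c (X j \<nu> \<mu>) - X j \<nu> \<mu> * tau c (X i \<mu> \<nu>)))"
    unfolding sum_distrib_left by (rule sum.swap)
  also have "\<dots> = (\<Sum>\<mu><m. \<Sum>\<nu><m. \<Sum>c<n. g s c * (X i \<mu> \<nu> * tau c (X j \<nu> \<mu>) - X j \<nu> \<mu> * tau c (X i \<mu> \<nu>)))"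
    by (intro sum.cong refl sum.swap)
  also have "\<dots> = (\<Sum>\<mu><m. \<Sum>\<nu><m. X i \<mu> \<nu> * tau' s (X j \<nu> \<mu>) - X j \<nu> \<mu> * tau' s (X i \<mu> \<nu>))"
    by (intro sum.cong refl)
      (simp add: tauP_def sum_subtractf sum_distrib_left right_diff_distrib mult_ac)
  also have "\<dots> = mtr m (mmul m (X i) (mapm (tau' s) (X j))) - mtr m (mmul m (mapm (tau' s) (X i)) (X j))"
    unfolding mtr_def mmul_def mapm_def by (simp add: sum_subtractf mult.commute)
  finally show ?thesis .
qed

lemma eval_form_Bform:
  assumes "i < n" "j < n" "s < n"
  shows "eval_form n g (Bform h n m g tau Am Ai i j) s
    = - h * (mtr m (mmul m (X i) (mapm (tau' s) (X j))) - mtr m (mmul m (mapm (tau' s) (X i)) (X j)))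
      - tau' i (eval_form n g (hE h n m g tau Am Ai j) s)
      + tau' j (eval_form n g (hE h n m g tau Am Ai i) s)"
  unfolding Bform_def dform_def tauP_def[symmetric] eval_form_add eval_form_diff eval_form_cmult
    eval_form_G3 tau'_eval_form[OF assms(1,3)] tau'_eval_form[OF assms(2,3)]
  by (simp add: algebra_simps)

lemma eval_form_RHSform:
  assumes "s < n"
  shows "eval_form n g (RHSform h n m g gi tau Am Ai i j) s
    = - h * (mtr m (mmul m (mmul m (X i) (X j)) (X s)) - mtr m (mmul m (mmul m (X j) (X i)) (X s)))"
proof -
  define R where "R r = mtr m (mmul m (mmul m (X i) (X j)) (X r)) - mtr m (mmul m (mmul m (X j) (X i)) (X r))"
    for r
  have "eval_form n g (RHSform h n m g gi tau Am Ai i j) s = - h * (\<Sum>c<n. \<Sum>r<n. g s c * (gi c r * R r))"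
    unfolding eval_form_def RHSform_def log_deriv_def[symmetric] mtr_diff R_def
    by (simp add: sum_distrib_left mult_ac)
  also have "\<dots> = - h * (\<Sum>r<n. mmul n g gi s r * R r)"
    by (subst sum.swap) (simp add: mmul_def sum_distrib_right mult.assoc)
  also have "\<dots> = - h * (\<Sum>r<n. if r = s then R r else 0)"
    using g_inverse assms unfolding is_inverse_def
    by (intro arg_cong[where f = "(*) _"] sum.cong refl) auto
  finally show ?thesis
    using assms by (simp add: R_def)
qed

lemma eval_form_Bform_trace:
  assumes ijs: "i < n" "j < n" "s < n"
  shows "eval_form n g (Bform (phi h) n m g tau Am Ai i j) s
    = - phi h * (mtr m (mmul m (mmul m (X i) (X j)) (X s)) - mtr m (mmul m (mmul m (X j) (X i)) (X s)))"
proof -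
  have commute: "tau' a (tau' b x) = tau' b (tau' a x)" if "a < n" "b < n" for a b x
    using tauP_commute that by blast
  have flat: "mtr m (mmul m (mapm (tau' a) (X b)) Q) = mtr m (mmul m (mapm (tau' b) (X a)) Q)
      - mtr m (mmul m (mmul m (X a) (X b)) Q) + mtr m (mmul m (mmul m (X b) (X a)) Q)"
    if "a < n" "b < n" for a b Q
    using mtr_mmul_log_deriv_flat[OF tau'_derivation tau'_derivation commute[OF that]] .
  have eval_hE_deriv: "tau' a (eval_form n g (hE (phi h) n m g tau Am Ai k) s)
      = - tau' a (tau' s (mtr m (X k)))
        + phi h * (mtr m (mmul m (mapm (tau' a) (X s)) (X k)) + mtr m (mmul m (X s) (mapm (tau' a) (X k))))"
    for a k
    unfolding eval_form_hE
    by (simp only: derivation_add[OF tau'_derivation] derivation_minus[OF tau'_derivation]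
        tau'_scalar derivation_mtr_mmul[OF tau'_derivation])
  have second_derivatives: "tau' i (tau' s (mtr m (X j))) = tau' j (tau' s (mtr m (X i)))"
    using ijs commute mtr_log_deriv_symmetric[OF tau'_derivation tau'_derivation commute[OF ijs(1,2)]]
    by metis
  have cyclic:
    "mtr m (mmul m (mmul m (X i) (X s)) (X j)) = mtr m (mmul m (mmul m (X j) (X i)) (X s))"
    "mtr m (mmul m (mmul m (X s) (X i)) (X j)) = mtr m (mmul m (mmul m (X i) (X j)) (X s))"
    "mtr m (mmul m (mmul m (X j) (X s)) (X i)) = mtr m (mmul m (mmul m (X i) (X j)) (X s))"
    "mtr m (mmul m (mmul m (X s) (X j)) (X i)) = mtr m (mmul m (mmul m (X j) (X i)) (X s))"
    by (metis mtr_mmul_rotate)+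
  have transposed:
    "mtr m (mmul m (X i) (mapm (tau' s) (X j))) = mtr m (mmul m (mapm (tau' s) (X j)) (X i))"
    "mtr m (mmul m (X s) (mapm (tau' i) (X j))) = mtr m (mmul m (mapm (tau' i) (X j)) (X s))"
    "mtr m (mmul m (X s) (mapm (tau' j) (X i))) = mtr m (mmul m (mapm (tau' j) (X i)) (X s))"
    by (rule mtr_mmul_commute)+
  show ?thesis
    unfolding eval_form_Bform[OF ijs] eval_hE_deriv second_derivatives transposed
      flat[OF ijs(1,3)] flat[OF ijs(2,3)] flat[OF ijs(2,1), where Q = "X s"] cyclic
    by (simp add: algebra_simps)
qed

end

theorem mainTheorem1:
  fixes phi :: "'k::comm_ring_1 \<Rightarrow> 'a::comm_ring_1"
    and hk :: 'k
    and n m :: nat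
    and tau :: "nat \<Rightarrow> 'a \<Rightarrow> 'a"
    and g gi Am Ai :: "nat \<Rightarrow> nat \<Rightarrow> 'a"
    and i j :: nat
  assumes hom: "is_ring_hom phi"
    and half: "2 * hk = 1"
    and der: "\<forall>r<n. kderiv phi (tau r)"
    and basis: "\<forall>D. kderiv phi D \<longrightarrow>
        (\<exists>!a. (\<forall>r\<ge>n. a r = 0) \<and> D = (\<lambda>x. \<Sum>r<n. a r * tau r x))"
    and comm: "\<forall>r<n. \<forall>s<n. \<forall>x. tau r (tau s x) = tau s (tau r x)"
    and ginv: "is_inverse n g gi"
    and commP: "\<forall>r<n. \<forall>s<n. \<forall>x. tauP n g tau r (tauP n g tau s x) = tauP n g tau s (tauP n g tau r x)"
    and Ainv: "is_inverse m Am Ai"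
    and ij: "i < n" "j < n"
  shows "\<forall>q<n. Bform (phi hk) n m g tau Am Ai i j q = RHSform (phi hk) n m g gi tau Am Ai i j q"
proof (intro allI impI)
  interpret frame_gauge phi n tau g m Am Ai gi
    using der basis comm commP Ainv ginv by unfold_locales
  fix q
  assume "q < n"
  show "Bform (phi hk) n m g tau Am Ai i j q = RHSform (phi hk) n m g gi tau Am Ai i j q"
    by (rule eval_form_inject[OF ginv _ \<open>q < n\<close>])
      (simp add: eval_form_Bform_trace[OF ij] eval_form_RHSform)
qed

end
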